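(* Let $A,B$ be closed densely defined operators in $\mathcal H$ and $G$ a bounded metric operator such that $GD(A)\subseteq D(B)$ and $BG\xi=GA\xi$ for all $\xi\in D(A)$. Let $A^\star$ be defined by $D(A^\star)=\{\eta\in\mathcal H: G\eta\in D(A^* ),\ A^*G\eta\in D(G^{-1})\}$, $A^\star\eta=G^{-1}A^*G\eta$. Then $A^\star$ is densely defined, and $B_0:=(A^\star)^*$ satisfies $GD(A)\subseteq D(B_0)$ and $B_0G\xi=GA\xi$ for all $\xi\in D(A)$; moreover $B_0\subseteq B'$ for every closed operator $B'$ satisfying $GD(A)\subseteq D(B')$ and $B'G\xi=GA\xi$ for all $\xi\in D(A)$ (so $B_0$ is minimal among such closed operators), and $GD(A)$ is a core for $B_0$.
   Context: A metric operator in $\mathcal H$ is a self-adjoint operator $G$ with $\langle G\xi,\xi\rangle>0$ for all nonzero $\xi\in D(G)$; $G^{-1}$ denotes its (possibly unbounded) inverse. $A^*$ denotes the Hilbert space adjoint. *)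

theory Defs
  imports "HOL-Analysis.Analysis"
begin

text \<open>A complex Hilbert space is modelled as a real Hilbert space together with a
complex structure jmul (multiplication by the imaginary unit), which is real-linear,
squares to minus the identity and is isometric.  Complex scalar multiplication and the
complex inner product (linear in the first, conjugate-linear in the second argument)
are derived from it.\<close>

class complex_hilbert = real_inner + complete_space +
  fixes jmul :: "'a \<Rightarrow> 'a"
  assumes jmul_add: "jmul (x + y) = jmul x + jmul y"
    and jmul_scaleR: "jmul (scaleR r x) = scaleR r (jmul x)"
    and jmul_jmul: "jmul (jmul x) = - x"
    and jmul_inner: "inner (jmul x) (jmul y) = inner x y"

definition scaleC :: "complex \<Rightarrow> 'a::complex_hilbert \<Rightarrow> 'a" where
  "scaleC c x = Re c *\<^sub>R x + Im c *\<^sub>R jmul x"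

definition cinner :: "'a::complex_hilbert \<Rightarrow> 'a \<Rightarrow> complex" where
  "cinner x y = Complex (inner x y) (inner x (jmul y))"

type_synonym 'a operator = "'a set \<times> ('a \<Rightarrow> 'a)"

definition dom_op :: "'a operator \<Rightarrow> 'a set" where "dom_op T = fst T"
definition app_op :: "'a operator \<Rightarrow> 'a \<Rightarrow> 'a" where "app_op T = snd T"

definition graph_op :: "'a operator \<Rightarrow> ('a \<times> 'a) set" where
  "graph_op T = {(x, app_op T x) | x. x \<in> dom_op T}"

definition lin_op :: "'a::complex_hilbert operator \<Rightarrow> bool" where
  "lin_op T \<longleftrightarrow> 0 \<in> dom_op T
     \<and> (\<forall>x\<in>dom_op T. \<forall>y\<in>dom_op T. x + y \<in> dom_op T \<and> app_op T (x + y) = app_op T x + app_op T y)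
     \<and> (\<forall>c. \<forall>x\<in>dom_op T. scaleC c x \<in> dom_op T \<and> app_op T (scaleC c x) = scaleC c (app_op T x))"

definition densely_defined :: "'a::complex_hilbert operator \<Rightarrow> bool" where
  "densely_defined T \<longleftrightarrow> closure (dom_op T) = UNIV"

definition closed_op :: "'a::complex_hilbert operator \<Rightarrow> bool" where
  "closed_op T \<longleftrightarrow> lin_op T \<and> closed (graph_op T)"

text \<open>Hilbert space adjoint (for densely defined T the vector z is unique).\<close>
definition adjoint_op :: "'a::complex_hilbert operator \<Rightarrow> 'a operator" where
  "adjoint_op T =
    ({y. \<exists>z. \<forall>x\<in>dom_op T. cinner (app_op T x) y = cinner x z},
     \<lambda>y. THE z. \<forall>x\<in>dom_op T. cinner (app_op T x) y = cinner x z)"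

definition op_le :: "'a operator \<Rightarrow> 'a operator \<Rightarrow> bool" where
  "op_le S T \<longleftrightarrow> dom_op S \<subseteq> dom_op T \<and> (\<forall>x\<in>dom_op S. app_op S x = app_op T x)"

definition is_core :: "'a::complex_hilbert set \<Rightarrow> 'a operator \<Rightarrow> bool" where
  "is_core C T \<longleftrightarrow> C \<subseteq> dom_op T \<and> closure {(x, app_op T x) | x. x \<in> C} = graph_op T"

definition bounded_op :: "('a::complex_hilbert \<Rightarrow> 'a) \<Rightarrow> bool" where
  "bounded_op G \<longleftrightarrow> bounded_linear G \<and> (\<forall>x. G (jmul x) = jmul (G x))"

definition bounded_metric_op :: "('a::complex_hilbert \<Rightarrow> 'a) \<Rightarrow> bool" where
  "bounded_metric_op G \<longleftrightarrow> bounded_op G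
     \<and> (\<forall>x y. cinner (G x) y = cinner x (G y))
     \<and> (\<forall>x. x \<noteq> 0 \<longrightarrow> Im (cinner (G x) x) = 0 \<and> Re (cinner (G x) x) > 0)"

text \<open>The operator A^\<star> = G^{-1} A^* G with its natural domain
  (G^{-1} has domain the range of G).\<close>
definition star_op :: "('a::complex_hilbert \<Rightarrow> 'a) \<Rightarrow> 'a operator \<Rightarrow> 'a operator" where
  "star_op G A =
    ({\<eta>. G \<eta> \<in> dom_op (adjoint_op A) \<and> app_op (adjoint_op A) (G \<eta>) \<in> range G},
     \<lambda>\<eta>. inv G (app_op (adjoint_op A) (G \<eta>)))"

end

theory Submission
  imports Defs
begin

(* Let Gamma = {(G x, G (A x)) | x in D(A)} be the graph of A transported by G.
   Writing adjoint_graph R for the adjoint of a relation R (pairs (y, z) with <v, y> = <u, z>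
   for all (u, v) in R), the definition of A-star = G^-1 A* G and the symmetry and injectivity
   of G give graph(A-star) = adjoint_graph Gamma.  Since Gamma is contained in the graph of the
   closed operator B, its closure is single-valued, and this forces A-star to be densely defined.
   Hence B0 = (A-star)* exists and graph(B0) = adjoint_graph (adjoint_graph Gamma) = closure Gamma
   by the double orthogonal complement theorem.  All claims follow at once: Gamma is contained
   in graph(B0) (intertwining), closure Gamma is contained in the graph of every closed B' that
   intertwines (minimality), and Gamma is dense in graph(B0) (G D(A) is a core). *)

lemma parallelogram_law:
  fixes a b :: "'b::real_inner"
  shows "norm (a - b)^2 = 2 * norm a ^2 + 2 * norm b ^2 - norm (a + b)^2"
  by (simp add: power2_norm_eq_inner inner_diff inner_add inner_commute algebra_simps)

(* If d bounds the distance from x to the convex set C from below, then two points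
   of C close to x are close to each other: their midpoint also lies in C. *)
lemma convex_midpoint_bound:
  fixes x :: "'b::real_inner"
  assumes cv: "convex C" and ab: "a \<in> C" "b \<in> C"
    and dle: "\<And>c. c \<in> C \<Longrightarrow> d \<le> norm (x - c)" and d0: "0 \<le> d"
  shows "norm (a - b)^2 \<le> 2 * norm (x - a)^2 + 2 * norm (x - b)^2 - 4 * d^2"
proof -
  define m where "m = (1/2) *\<^sub>R a + (1/2) *\<^sub>R b"
  have "m \<in> C" using cv ab unfolding convex_def m_def by auto
  have "(x - b) + (x - a) = 2 *\<^sub>R (x - m)"
    by (simp add: m_def algebra_simps scaleR_2)
  then have "2 * d \<le> norm ((x - b) + (x - a))"
    using dle[OF \<open>m \<in> C\<close>] by simp
  then have "4 * d^2 \<le> norm ((x - b) + (x - a))^2"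
    using d0 power_mono[of "2*d" _ 2] by (simp add: power_mult_distrib)
  moreover have "norm (a - b)^2 = 2 * norm (x - b)^2 + 2 * norm (x - a)^2 - norm ((x - b) + (x - a))^2"
    using parallelogram_law[of "x - b" "x - a"] by (simp add: algebra_simps)
  ultimately show ?thesis by linarith
qed

(* Every nonempty closed convex subset of a real Hilbert space has a point nearest
   to x: a minimising sequence is Cauchy by the midpoint bound. *)
lemma nearest_point_exists:
  fixes C :: "'b::{real_inner,complete_space} set"
  assumes cl: "closed C" and cv: "convex C" and ne: "C \<noteq> {}"
  obtains p where "p \<in> C" "\<And>y. y \<in> C \<Longrightarrow> norm (x - p) \<le> norm (x - y)"
proof -
  define d where "d = infdist x C"
  have d0: "0 \<le> d" by (simp add: d_def infdist_nonneg)
  have dle: "d \<le> norm (x - c)" if "c \<in> C" for c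
    using infdist_le[OF that] by (simp add: d_def dist_norm)
  have "\<exists>y\<in>C. norm (x - y) < d + inverse (real (Suc n))" for n
  proof -
    have "infdist x C < d + inverse (real (Suc n))" by (simp add: d_def)
    then show ?thesis
      unfolding infdist_notempty[OF ne] dist_norm
      by (subst (asm) cINF_less_iff) (auto simp: ne intro: bdd_belowI[where m=0])
  qed
  then obtain y where yC: "\<And>n. y n \<in> C"
    and yd: "\<And>n. norm (x - y n) < d + inverse (real (Suc n))"
    by metis
  have dist_lim: "(\<lambda>n. norm (x - y n)) \<longlonglongrightarrow> d"
  proof (rule tendsto_sandwich)
    show "\<forall>\<^sub>F n in sequentially. d \<le> norm (x - y n)" using dle yC by simp
    show "\<forall>\<^sub>F n in sequentially. norm (x - y n) \<le> d + inverse (real (Suc n))"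
      by (intro always_eventually allI less_imp_le yd)
    show "(\<lambda>n. d) \<longlonglongrightarrow> d" by simp
    show "(\<lambda>n. d + inverse (real (Suc n))) \<longlonglongrightarrow> d"
      using tendsto_add[OF tendsto_const LIMSEQ_inverse_real_of_nat, of d] by simp
  qed
  have "Cauchy y"
    unfolding Cauchy_def
  proof (intro allI impI)
    fix r :: real assume r: "0 < r"
    have "(\<lambda>n. norm (x - y n)^2) \<longlonglongrightarrow> d^2" by (intro tendsto_intros dist_lim)
    moreover have "d^2 < d^2 + r^2 / 4" using r by simp
    ultimately have "\<forall>\<^sub>F n in sequentially. norm (x - y n)^2 < d^2 + r^2 / 4"
      by (rule order_tendstoD(2))
    then obtain N where N: "\<And>n. N \<le> n \<Longrightarrow> norm (x - y n)^2 < d^2 + r^2 / 4"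
      unfolding eventually_sequentially by blast
    show "\<exists>M. \<forall>m\<ge>M. \<forall>n\<ge>M. dist (y m) (y n) < r"
    proof (intro exI allI impI)
      fix m n assume "N \<le> m" "N \<le> n"
      then have "norm (y m - y n)^2 < r^2"
        using convex_midpoint_bound[OF cv yC yC dle d0, of m n] N[of m] N[of n] by linarith
      then show "dist (y m) (y n) < r" using r by (simp add: dist_norm power_less_imp_less_base)
    qed
  qed
  then obtain p where yp: "y \<longlonglongrightarrow> p" using Cauchy_convergent_iff convergent_def by blast
  have "p \<in> C" using closed_sequentially[OF cl yC yp] .
  moreover have "(\<lambda>n. norm (x - y n)) \<longlonglongrightarrow> norm (x - p)" by (intro tendsto_intros yp)
  then have "norm (x - p) = d" using dist_lim LIMSEQ_unique by blast
  ultimately show ?thesis using that dle by simp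
qed

lemma norm_diff_scaleR_sq:
  fixes v w :: "'b::real_inner"
  shows "norm (v - u *\<^sub>R w)^2 = norm v^2 - 2 * u * inner v w + u^2 * norm w^2"
proof -
  have "norm (v - u *\<^sub>R w)^2 = inner (v - u *\<^sub>R w) (v - u *\<^sub>R w)"
    by (simp add: power2_norm_eq_inner)
  also have "\<dots> = inner v v - 2 * u * inner v w + u^2 * inner w w"
    by (simp add: inner_diff_left inner_diff_right inner_commute power2_eq_square algebra_simps)
  finally show ?thesis by (simp add: power2_norm_eq_inner)
qed

lemma nearest_point_variational:
  fixes x :: "'b::real_inner"
  assumes cv: "convex C" and pc: "p \<in> C" "c \<in> C"
    and pmin: "\<And>y. y \<in> C \<Longrightarrow> norm (x - p) \<le> norm (x - y)"
  shows "inner (x - p) (c - p) \<le> 0"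
proof (rule ccontr)
  define k where "k = inner (x - p) (c - p)"
  define m where "m = norm (c - p)^2"
  define u where "u = k / (m + k)"
  assume "\<not> inner (x - p) (c - p) \<le> 0"
  then have k: "0 < k" by (simp add: k_def)
  have m0: "0 \<le> m" by (simp add: m_def)
  have u: "0 < u" "u \<le> 1" using k m0 by (auto simp: u_def)
  have "(1 - u) *\<^sub>R p + u *\<^sub>R c \<in> C" using cv pc u unfolding convex_def by auto
  moreover have "x - ((1 - u) *\<^sub>R p + u *\<^sub>R c) = (x - p) - u *\<^sub>R (c - p)"
    by (simp add: algebra_simps)
  ultimately have "norm (x - p) \<le> norm ((x - p) - u *\<^sub>R (c - p))"
    using pmin by metis
  then have "norm (x - p)^2 \<le> norm ((x - p) - u *\<^sub>R (c - p))^2"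
    by (simp add: power_mono)
  also have "\<dots> = norm (x - p)^2 - 2 * u * k + u^2 * m"
    by (simp add: k_def m_def norm_diff_scaleR_sq)
  finally have "2 * k \<le> u * m" using u by (simp add: power2_eq_square)
  also have "u * m \<le> k" using k m0 by (simp add: u_def field_simps)
  finally show False using k by simp
qed

lemma orthogonal_complement_closure:
  fixes S :: "'b::{real_inner,complete_space} set"
  assumes sub: "subspace S" and perp: "\<And>y. (\<forall>s\<in>S. inner s y = 0) \<Longrightarrow> inner x y = 0"
  shows "x \<in> closure S"
proof -
  have cv: "convex (closure S)" by (simp add: convex_closure subspace_imp_convex sub)
  have "closure S \<noteq> {}" using sub subspace_0 closure_subset by blast
  then obtain p where pS: "p \<in> closure S"
    and pmin: "\<And>y. y \<in> closure S \<Longrightarrow> norm (x - p) \<le> norm (x - y)"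
    using nearest_point_exists[OF closed_closure cv] by metis
  have orth: "inner s (x - p) = 0" if s: "s \<in> S" for s
  proof -
    have "t * inner (x - p) s \<le> inner (x - p) p" for t
    proof -
      have "t *\<^sub>R s \<in> closure S" using subspace_scale[OF sub s] closure_subset by blast
      from nearest_point_variational[OF cv pS this pmin] show ?thesis
        by (simp add: inner_diff_right)
    qed
    from this[of "(inner (x - p) p + 1) / inner (x - p) s"] show ?thesis
      by (cases "inner (x - p) s = 0") (auto simp: inner_commute)
  qed
  have "closed {q. inner q (x - p) = 0}" by (intro closed_Collect_eq continuous_intros)
  then have "closure S \<subseteq> {q. inner q (x - p) = 0}"
    using orth by (intro closure_minimal) auto
  then have "inner p (x - p) = 0" using pS by blast
  moreover have "inner x (x - p) = 0" using perp orth by blast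
  ultimately have "inner (x - p) (x - p) = 0" by (simp add: inner_diff_left)
  then show ?thesis using pS by simp
qed

definition adjoint_graph :: "('a::real_inner \<times> 'a) set \<Rightarrow> ('a \<times> 'a) set" where
  "adjoint_graph \<Gamma> = {(y, z). \<forall>u v. (u, v) \<in> \<Gamma> \<longrightarrow> inner v y = inner u z}"

lemma adjoint_graph_orth:
  "(y, z) \<in> adjoint_graph \<Gamma> \<longleftrightarrow> (\<forall>s\<in>\<Gamma>. inner s (z, - y) = 0)"
  by (auto simp: adjoint_graph_def inner_commute)

(* Adjoint relations are closed, being intersections of closed hyperplanes. *)
lemma closed_adjoint_graph: "closed (adjoint_graph \<Gamma>)"
proof -
  have "adjoint_graph \<Gamma> = (\<Inter>s\<in>\<Gamma>. {p. inner (snd s) (fst p) = inner (fst s) (snd p)})"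
    unfolding adjoint_graph_def by fastforce
  moreover have "closed {p. inner (snd s) (fst p) = inner (fst s) (snd p)}" for s :: "'a \<times> 'a"
    by (intro closed_Collect_eq continuous_intros)
  ultimately show ?thesis by (simp add: closed_INT)
qed

lemma subspace_adjoint_graph: "subspace (adjoint_graph \<Gamma>)"
  unfolding subspace_def adjoint_graph_def by (auto simp: inner_add_right zero_prod_def)

lemma adjoint_graph_twice:
  fixes \<Gamma> :: "('a::{real_inner,complete_space} \<times> 'a) set"
  assumes sub: "subspace \<Gamma>"
  shows "adjoint_graph (adjoint_graph \<Gamma>) = closure \<Gamma>"
proof
  have "(a, b) \<in> adjoint_graph (adjoint_graph \<Gamma>)" if ab: "(a, b) \<in> \<Gamma>" for a b
  proof -
    have "inner z a = inner y b" if "(y, z) \<in> adjoint_graph \<Gamma>" for y z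
      using that ab by (simp add: adjoint_graph_def inner_commute)
    then show ?thesis by (simp add: adjoint_graph_def)
  qed
  then have "\<Gamma> \<subseteq> adjoint_graph (adjoint_graph \<Gamma>)" by auto
  then show "closure \<Gamma> \<subseteq> adjoint_graph (adjoint_graph \<Gamma>)"
    by (rule closure_minimal[OF _ closed_adjoint_graph])
next
  show "adjoint_graph (adjoint_graph \<Gamma>) \<subseteq> closure \<Gamma>"
  proof (clarify)
    fix u v assume uv: "(u, v) \<in> adjoint_graph (adjoint_graph \<Gamma>)"
    show "(u, v) \<in> closure \<Gamma>"
    proof (rule orthogonal_complement_closure[OF sub])
      fix q :: "'a \<times> 'a" assume "\<forall>s\<in>\<Gamma>. inner s q = 0"
      then have "(- snd q, fst q) \<in> adjoint_graph \<Gamma>" by (simp add: adjoint_graph_orth)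
      then have "inner (fst q) u = inner (- snd q) v"
        using uv unfolding adjoint_graph_def[of "adjoint_graph \<Gamma>"] by blast
      then show "inner (u, v) q = 0" by (cases q) (simp add: inner_commute)
    qed
  qed
qed

lemma inner_jmul_right: "inner a (jmul (y::'a::complex_hilbert)) = - inner (jmul a) y"
  using jmul_inner[of a "jmul y"] by (simp add: jmul_jmul)

lemma scaleC_ii: "scaleC \<i> (x::'a::complex_hilbert) = jmul x"
  by (simp add: scaleC_def)

lemma scaleC_real: "scaleC (complex_of_real r) (x::'a::complex_hilbert) = r *\<^sub>R x"
  by (simp add: scaleC_def)

(* A set of pairs is invariant under the complex structure acting on both components;
   together with real linearity this is complex linearity. *)
definition jmul_closed :: "('a::complex_hilbert \<times> 'a) set \<Rightarrow> bool" where
  "jmul_closed \<Gamma> \<longleftrightarrow> (\<forall>(u, v)\<in>\<Gamma>. (jmul u, jmul v) \<in> \<Gamma>)"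

lemma jmul_closed_adjoint_graph:
  assumes "jmul_closed \<Gamma>"
  shows "jmul_closed (adjoint_graph \<Gamma>)"
  unfolding jmul_closed_def adjoint_graph_def
proof (clarify)
  fix y z u v assume yz: "\<forall>u v. (u, v) \<in> \<Gamma> \<longrightarrow> inner v y = inner u z" and uv: "(u, v) \<in> \<Gamma>"
  have "(jmul u, jmul v) \<in> \<Gamma>" using assms uv by (auto simp: jmul_closed_def)
  then show "inner v (jmul y) = inner u (jmul z)" using yz by (auto simp: inner_jmul_right)
qed

(* For complex relations the adjoint condition may equivalently be stated with the complex
   inner product: its imaginary part follows from the real part applied to (jmul u, jmul v). *)
lemma adjoint_graph_cinner:
  fixes \<Gamma> :: "('a::complex_hilbert \<times> 'a) set"
  assumes "jmul_closed \<Gamma>"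
  shows "(\<forall>(u, v)\<in>\<Gamma>. cinner v y = cinner u z) \<longleftrightarrow> (y, z) \<in> adjoint_graph \<Gamma>"
proof -
  have "inner v (jmul y) = inner u (jmul z)" if "(u, v) \<in> \<Gamma>" "(y, z) \<in> adjoint_graph \<Gamma>" for u v
  proof -
    have "(jmul u, jmul v) \<in> \<Gamma>" using assms that(1) by (auto simp: jmul_closed_def)
    then show ?thesis using that(2) by (auto simp: adjoint_graph_def inner_jmul_right)
  qed
  then show ?thesis by (auto simp: adjoint_graph_def cinner_def)
qed

lemma graph_op_iff: "(u, v) \<in> graph_op T \<longleftrightarrow> u \<in> dom_op T \<and> app_op T u = v"
  by (auto simp: graph_op_def)

lemma op_le_iff_graph: "op_le S T \<longleftrightarrow> graph_op S \<subseteq> graph_op T"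
  by (auto simp: op_le_def graph_op_def)

lemma lin_op_iff_graph:
  fixes T :: "'a::complex_hilbert operator"
  shows "lin_op T \<longleftrightarrow> subspace (graph_op T) \<and> jmul_closed (graph_op T)"
proof
  assume lin: "lin_op T"
  have scaleR: "r *\<^sub>R x \<in> dom_op T \<and> app_op T (r *\<^sub>R x) = r *\<^sub>R app_op T x"
    if "x \<in> dom_op T" for r x
    using lin that unfolding lin_op_def by (metis scaleC_real)
  have jmul: "jmul x \<in> dom_op T \<and> app_op T (jmul x) = jmul (app_op T x)"
    if "x \<in> dom_op T" for x
    using lin that unfolding lin_op_def by (metis scaleC_ii)
  have add: "x + y \<in> dom_op T \<and> app_op T (x + y) = app_op T x + app_op T y"
    if "x \<in> dom_op T" "y \<in> dom_op T" for x y
    using lin that unfolding lin_op_def by blast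
  have zero: "0 \<in> dom_op T \<and> app_op T 0 = 0"
    using lin scaleR[of 0 0] unfolding lin_op_def by simp
  show "subspace (graph_op T) \<and> jmul_closed (graph_op T)"
    unfolding subspace_def jmul_closed_def graph_op_def
    using zero add scaleR jmul by (fastforce simp: zero_prod_def)
next
  assume "subspace (graph_op T) \<and> jmul_closed (graph_op T)"
  then have sub: "subspace (graph_op T)" and jc: "jmul_closed (graph_op T)" by auto
  have pt: "(x, app_op T x) \<in> graph_op T" if "x \<in> dom_op T" for x
    using that by (simp add: graph_op_iff)
  have "(0, 0) \<in> graph_op T" using subspace_0[OF sub] by (simp add: zero_prod_def)
  moreover have "(x + y, app_op T x + app_op T y) \<in> graph_op T"
    if "x \<in> dom_op T" "y \<in> dom_op T" for x y
    using subspace_add[OF sub pt[OF that(1)] pt[OF that(2)]] by simp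
  moreover have "(scaleC c x, scaleC c (app_op T x)) \<in> graph_op T" if "x \<in> dom_op T" for c x
  proof -
    have "(jmul x, jmul (app_op T x)) \<in> graph_op T" using jc pt[OF that] by (auto simp: jmul_closed_def)
    from subspace_add[OF sub subspace_scale[OF sub pt[OF that], of "Re c"]
        subspace_scale[OF sub this, of "Im c"]]
    show ?thesis by (simp add: scaleC_def)
  qed
  ultimately show "lin_op T" unfolding lin_op_def graph_op_iff by blast
qed

lemma lin_op_graph_zero:
  assumes "lin_op T" and "(0, w) \<in> graph_op T"
  shows "w = 0"
  using assms subspace_0[of "graph_op T"] by (auto simp: lin_op_iff_graph graph_op_def zero_prod_def)

lemma closure_graph_extension:
  assumes gT: "graph_op T = closure \<Gamma>"
  shows "\<Gamma> \<subseteq> graph_op T"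
    and "closed_op T' \<Longrightarrow> \<Gamma> \<subseteq> graph_op T' \<Longrightarrow> op_le T T'"
    and "is_core (fst ` \<Gamma>) T"
proof -
  show sub: "\<Gamma> \<subseteq> graph_op T" using gT closure_subset by blast
  show "op_le T T'" if "closed_op T'" "\<Gamma> \<subseteq> graph_op T'"
    using that closure_minimal gT unfolding closed_op_def op_le_iff_graph by metis
  have "{(x, app_op T x) | x. x \<in> fst ` \<Gamma>} = \<Gamma>" using sub by (force simp: graph_op_def)
  then show "is_core (fst ` \<Gamma>) T" using sub gT by (force simp: is_core_def graph_op_def)
qed

lemma intertwines_iff_graph:
  "G ` dom_op A \<subseteq> dom_op B \<and> (\<forall>\<xi>\<in>dom_op A. app_op B (G \<xi>) = G (app_op A \<xi>))
    \<longleftrightarrow> map_prod G G ` graph_op A \<subseteq> graph_op B"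
proof -
  have "map_prod G G ` graph_op A = (\<lambda>\<xi>. (G \<xi>, G (app_op A \<xi>))) ` dom_op A"
    by (auto simp: graph_op_def)
  then show ?thesis by (auto simp: graph_op_iff)
qed

lemma dense_inner_unique:
  fixes z1 z2 :: "'a::real_inner"
  assumes "closure D = UNIV" and "\<And>x. x \<in> D \<Longrightarrow> inner x z1 = inner x z2"
  shows "z1 = z2"
proof -
  have "closed {x. inner x (z1 - z2) = 0}" by (intro closed_Collect_eq continuous_intros)
  then have "closure D \<subseteq> {x. inner x (z1 - z2) = 0}"
    using assms(2) by (intro closure_minimal) (auto simp: inner_diff_right)
  then have "inner (z1 - z2) (z1 - z2) = 0" using assms(1) by blast
  then show ?thesis by simp
qed

lemma graph_adjoint_op:
  fixes T :: "'a::complex_hilbert operator"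
  assumes dd: "densely_defined T" and lin: "lin_op T"
  shows "graph_op (adjoint_op T) = adjoint_graph (graph_op T)"
proof -
  define P where "P y z \<longleftrightarrow> (y, z) \<in> adjoint_graph (graph_op T)" for y z
  have cond: "(\<forall>x\<in>dom_op T. cinner (app_op T x) y = cinner x z) \<longleftrightarrow> P y z" for y z
    using adjoint_graph_cinner[of "graph_op T" y z] lin
    unfolding P_def lin_op_iff_graph by (auto simp: graph_op_def)
  have uniq: "z1 = z2" if "P y z1" "P y z2" for y z1 z2
    using dd that unfolding densely_defined_def P_def adjoint_graph_def
    by (intro dense_inner_unique[of "dom_op T"]) (auto simp: graph_op_def)
  have the: "(THE z. P y z) = z" if "P y z" for y z
    using uniq that by (intro the_equality) auto
  have "adjoint_op T = ({y. \<exists>z. P y z}, \<lambda>y. THE z. P y z)"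
    unfolding adjoint_op_def cond ..
  then have "graph_op (adjoint_op T) = {(y, z). P y z}"
    unfolding graph_op_def dom_op_def app_op_def using the by auto
  then show ?thesis by (auto simp: P_def)
qed

(* An operator whose graph is the adjoint of a linear relation Gamma is densely defined as
   soon as the closure of Gamma is the graph of a (single-valued) operator: a vector w orthogonal
   to the domain gives (0, w) in the second adjoint of Gamma, i.e. in its closure. *)
lemma densely_defined_adjoint_graph:
  fixes T :: "'a::complex_hilbert operator"
  assumes lin: "lin_op T" and gT: "graph_op T = adjoint_graph \<Gamma>" and sub: "subspace \<Gamma>"
    and single: "\<And>w. (0, w) \<in> closure \<Gamma> \<Longrightarrow> w = 0"
  shows "densely_defined T"
proof -
  have "dom_op T = fst ` graph_op T" by (force simp: graph_op_def)
  moreover have "subspace (graph_op T)" using lin by (simp add: lin_op_iff_graph)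
  ultimately have subD: "subspace (dom_op T)" by (simp add: linear_subspace_image[OF linear_fst])
  have "x \<in> closure (dom_op T)" for x
  proof (rule orthogonal_complement_closure[OF subD])
    fix w assume w: "\<forall>s\<in>dom_op T. inner s w = 0"
    have "(0, w) \<in> adjoint_graph (adjoint_graph \<Gamma>)"
      using w unfolding gT[symmetric] by (auto simp: adjoint_graph_def graph_op_def)
    then have "w = 0" using single adjoint_graph_twice[OF sub] by simp
    then show "inner x w = 0" by simp
  qed
  then show ?thesis by (auto simp: densely_defined_def)
qed

lemma bounded_metric_op_sym:
  assumes "bounded_metric_op G"
  shows "inner (G x) y = inner x (G y)"
proof -
  have "cinner (G x) y = cinner x (G y)" using assms by (simp add: bounded_metric_op_def)
  then show ?thesis by (simp add: cinner_def)
qed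

(* A metric operator is injective, by strict positivity. *)
lemma bounded_metric_op_inj:
  assumes G: "bounded_metric_op G"
  shows "inj G"
proof (rule injI)
  fix x y assume "G x = G y"
  moreover have "linear G" using G by (simp add: bounded_metric_op_def bounded_op_def bounded_linear.linear)
  ultimately have "G (x - y) = 0" by (simp add: linear_diff)
  then have "\<not> 0 < Re (cinner (G (x - y)) (x - y))" by (simp add: cinner_def)
  then show "x = y" using G unfolding bounded_metric_op_def by (metis eq_iff_diff_eq_0)
qed

lemma graph_star_op:
  assumes "inj G"
  shows "(y, z) \<in> graph_op (star_op G A) \<longleftrightarrow> (G y, G z) \<in> graph_op (adjoint_op A)"
  using assms by (auto simp: graph_op_iff star_op_def dom_op_def app_op_def inv_f_f f_inv_into_f)

lemma adjoint_graph_map_prod: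
  assumes sym: "\<And>x y. inner (G x) y = inner x (G y)"
  shows "(y, z) \<in> adjoint_graph (map_prod G G ` \<Gamma>) \<longleftrightarrow> (G y, G z) \<in> adjoint_graph \<Gamma>"
proof -
  have "(y, z) \<in> adjoint_graph (map_prod G G ` \<Gamma>)
      \<longleftrightarrow> (\<forall>(u, v)\<in>\<Gamma>. inner (G v) y = inner (G u) z)"
    unfolding adjoint_graph_def by auto
  also have "\<dots> \<longleftrightarrow> (G y, G z) \<in> adjoint_graph \<Gamma>"
    unfolding adjoint_graph_def by (auto simp: sym)
  finally show ?thesis .
qed

lemma transported_graph:
  fixes A :: "'a::complex_hilbert operator"
  assumes A: "lin_op A" and G: "bounded_metric_op G"
  shows "subspace (map_prod G G ` graph_op A) \<and> jmul_closed (map_prod G G ` graph_op A)"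
proof
  have lin: "linear G" using G by (simp add: bounded_metric_op_def bounded_op_def bounded_linear.linear)
  have "linear (map_prod G G)"
  proof (rule linearI)
    fix p q :: "'a \<times> 'a" and r :: real
    show "map_prod G G (p + q) = map_prod G G p + map_prod G G q"
      by (cases p, cases q) (simp add: linear_add[OF lin])
    show "map_prod G G (r *\<^sub>R p) = r *\<^sub>R map_prod G G p"
      by (cases p) (simp add: linear_scale[OF lin])
  qed
  then show "subspace (map_prod G G ` graph_op A)"
    using A by (simp add: lin_op_iff_graph linear_subspace_image)
  have Gj: "G (jmul x) = jmul (G x)" for x using G by (simp add: bounded_metric_op_def bounded_op_def)
  show "jmul_closed (map_prod G G ` graph_op A)"
    unfolding jmul_closed_def
  proof (clarify)
    fix u v assume "(u, v) \<in> graph_op A"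
    then have "(jmul u, jmul v) \<in> graph_op A" using A by (auto simp: lin_op_iff_graph jmul_closed_def)
    then show "(jmul (G u), jmul (G v)) \<in> map_prod G G ` graph_op A"
      by (metis Gj map_prod_simp rev_image_eqI)
  qed
qed

lemma graph_star_op_adjoint_graph:
  fixes A :: "'a::complex_hilbert operator"
  assumes A: "densely_defined A" "lin_op A" and G: "bounded_metric_op G"
  shows "graph_op (star_op G A) = adjoint_graph (map_prod G G ` graph_op A)"
proof (rule set_eqI, clarify)
  fix y z
  have "(y, z) \<in> graph_op (star_op G A) \<longleftrightarrow> (G y, G z) \<in> graph_op (adjoint_op A)"
    by (rule graph_star_op[OF bounded_metric_op_inj[OF G]])
  also have "\<dots> \<longleftrightarrow> (G y, G z) \<in> adjoint_graph (graph_op A)"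
    by (simp add: graph_adjoint_op[OF A])
  also have "\<dots> \<longleftrightarrow> (y, z) \<in> adjoint_graph (map_prod G G ` graph_op A)"
    by (simp add: adjoint_graph_map_prod[OF bounded_metric_op_sym[OF G]])
  finally show "(y, z) \<in> graph_op (star_op G A) \<longleftrightarrow> (y, z) \<in> adjoint_graph (map_prod G G ` graph_op A)" .
qed

(* Density uses that Gamma lies in the graph of the
   closed operator B, so its closure is single-valued. *)
lemma adjoint_star_op_graph:
  fixes A B :: "'a::complex_hilbert operator"
  assumes A: "closed_op A" "densely_defined A" and B: "closed_op B"
    and G: "bounded_metric_op G" and \<Gamma>B: "map_prod G G ` graph_op A \<subseteq> graph_op B"
  shows "densely_defined (star_op G A)
    \<and> graph_op (adjoint_op (star_op G A)) = closure (map_prod G G ` graph_op A)"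
proof -
  define \<Gamma> where "\<Gamma> = map_prod G G ` graph_op A"
  define S where "S = star_op G A"
  have linA: "lin_op A" using A(1) by (simp add: closed_op_def)
  have \<Gamma>: "subspace \<Gamma>" "jmul_closed \<Gamma>" using transported_graph[OF linA G] by (auto simp: \<Gamma>_def)
  have gS: "graph_op S = adjoint_graph \<Gamma>"
    using graph_star_op_adjoint_graph[OF A(2) linA G] by (simp add: S_def \<Gamma>_def)
  have linS: "lin_op S"
    using \<Gamma> by (simp add: lin_op_iff_graph gS subspace_adjoint_graph jmul_closed_adjoint_graph)
  have clB: "closure \<Gamma> \<subseteq> graph_op B"
    using B \<Gamma>B closure_minimal unfolding closed_op_def \<Gamma>_def by blast
  have ddS: "densely_defined S"
  proof (rule densely_defined_adjoint_graph[OF linS gS \<Gamma>(1)])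
    fix w assume "(0, w) \<in> closure \<Gamma>"
    then show "w = 0" using clB B lin_op_graph_zero unfolding closed_op_def by blast
  qed
  moreover have "graph_op (adjoint_op S) = closure \<Gamma>"
    using graph_adjoint_op[OF ddS linS] adjoint_graph_twice[OF \<Gamma>(1)] gS by simp
  ultimately show ?thesis by (simp add: S_def \<Gamma>_def)
qed

theorem lemma5p8:
  fixes A B :: "'a::complex_hilbert operator" and G :: "'a \<Rightarrow> 'a"
  assumes A: "closed_op A" "densely_defined A"
    and B: "closed_op B" "densely_defined B"
    and G: "bounded_metric_op G"
    and GAB: "G ` dom_op A \<subseteq> dom_op B"
    and inter: "\<forall>\<xi>\<in>dom_op A. app_op B (G \<xi>) = G (app_op A \<xi>)"
  shows "densely_defined (star_op G A)
    \<and> G ` dom_op A \<subseteq> dom_op (adjoint_op (star_op G A))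
    \<and> (\<forall>\<xi>\<in>dom_op A. app_op (adjoint_op (star_op G A)) (G \<xi>) = G (app_op A \<xi>))
    \<and> (\<forall>B'. closed_op B' \<and> G ` dom_op A \<subseteq> dom_op B'
            \<and> (\<forall>\<xi>\<in>dom_op A. app_op B' (G \<xi>) = G (app_op A \<xi>))
           \<longrightarrow> op_le (adjoint_op (star_op G A)) B')
    \<and> is_core (G ` dom_op A) (adjoint_op (star_op G A))"
proof -
  define \<Gamma> where "\<Gamma> = map_prod G G ` graph_op A"
  have "\<Gamma> \<subseteq> graph_op B" using GAB inter intertwines_iff_graph[of G A B] by (simp add: \<Gamma>_def)
  then have dd: "densely_defined (star_op G A)"
    and gB0: "graph_op (adjoint_op (star_op G A)) = closure \<Gamma>"
    using adjoint_star_op_graph[OF A B(1) G] by (simp_all add: \<Gamma>_def)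
  have intertwine: "G ` dom_op A \<subseteq> dom_op (adjoint_op (star_op G A))
      \<and> (\<forall>\<xi>\<in>dom_op A. app_op (adjoint_op (star_op G A)) (G \<xi>) = G (app_op A \<xi>))"
    using closure_graph_extension(1)[OF gB0] intertwines_iff_graph[of G A "adjoint_op (star_op G A)"]
    by (simp add: \<Gamma>_def)
  have minimal: "op_le (adjoint_op (star_op G A)) B'"
    if "closed_op B' \<and> G ` dom_op A \<subseteq> dom_op B'
      \<and> (\<forall>\<xi>\<in>dom_op A. app_op B' (G \<xi>) = G (app_op A \<xi>))" for B'
    using that closure_graph_extension(2)[OF gB0] intertwines_iff_graph[of G A B'] by (simp add: \<Gamma>_def)
  have "fst ` \<Gamma> = G ` dom_op A" by (force simp: \<Gamma>_def graph_op_def)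
  then have core: "is_core (G ` dom_op A) (adjoint_op (star_op G A))"
    using closure_graph_extension(3)[OF gB0] by simp
  show ?thesis using dd intertwine minimal core by blast
qed

end
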